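(* Let $\gamma\ge1$ be an integer, $C\subset\{0,1,\dots,p^\gamma-1\}$ nonempty, and $\Omega=\bigsqcup_{c\in C}(c+p^\gamma\mathbb{Z}_p)$. If $\Lambda\subset\mathbb{Q}_p$ is a spectrum of $\Omega$, then $\sharp(B(a,p^\gamma)\cap\Lambda)=\sharp C$ for every $a\in\mathbb{Q}_p$.
   Context: $p\ge2$ is a prime. $\mathfrak{m}$ is the Haar measure on $\mathbb{Q}_p$ with $\mathfrak{m}(\mathbb{Z}_p)=1$. $B(a,p^\gamma)=a+p^{-\gamma}\mathbb{Z}_p$. Characters: $\chi(x)=e^{2\pi i\{x\}}$, where $\{x\}$ is the $p$-adic fractional part of $x$, and $\chi_y(x)=\chi(yx)$. Spectrum: $\Lambda$ is a spectrum of $\Omega$ if $\{\chi_\lambda|_\Omega\}_{\lambda\in\Lambda}$ is an orthonormal basis of $L^2(\mathfrak{m}|_\Omega/\mathfrak{m}(\Omega))$. *)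

theory Defs
  imports "HOL-Probability.Probability"
begin

text \<open>An element x of Q_p is represented by the family of its
residues x mod p^n Z_p (n an integer), each residue given by its canonical representative,
a rational number of the form a / p^k lying in [0, p^n). In particular x 0 is the p-adic
fractional part of x.\<close>

definition rmod :: "rat \<Rightarrow> rat \<Rightarrow> rat" where
  "rmod a m = a - m * of_int \<lfloor>a / m\<rfloor>"

definition Zinvp :: "nat \<Rightarrow> rat set" where
  "Zinvp p = {q. \<exists>(a::int) (k::nat). q = of_int a / of_nat p ^ k}"

definition Qp :: "nat \<Rightarrow> (int \<Rightarrow> rat) set" where
  "Qp p = {x. (\<forall>n. x n \<in> Zinvp p \<and> 0 \<le> x n \<and> x n < of_nat p powi n)
              \<and> (\<forall>n. x n = rmod (x (n + 1)) (of_nat p powi n))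
              \<and> (\<exists>N. \<forall>n\<le>N. x n = 0)}"

definition padic_of_int :: "nat \<Rightarrow> int \<Rightarrow> (int \<Rightarrow> rat)" where
  "padic_of_int p c = (\<lambda>n. rmod (of_int c) (of_nat p powi n))"

text \<open>Multiplication: (x y) mod p^n Z_p is the eventual value of x_m y_m mod p^n, m large.\<close>
definition padic_mult :: "nat \<Rightarrow> (int \<Rightarrow> rat) \<Rightarrow> (int \<Rightarrow> rat) \<Rightarrow> (int \<Rightarrow> rat)" where
  "padic_mult p x y = (\<lambda>n. THE q. \<exists>M. \<forall>m\<ge>M. rmod (x m * y m) (of_nat p powi n) = q)"

definition padic_frac :: "(int \<Rightarrow> rat) \<Rightarrow> rat" where
  "padic_frac x = x 0"

definition padic_chi :: "nat \<Rightarrow> (int \<Rightarrow> rat) \<Rightarrow> (int \<Rightarrow> rat) \<Rightarrow> complex" where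
  "padic_chi p y x = cis (2 * pi * real_of_rat (padic_frac (padic_mult p y x)))"

text \<open>B(a, p^k) = a + p^(-k) Z_p = {x. x - a \<in> p^(-k) Z_p}, i.e. x and a have the same residue
modulo p^(-k) Z_p.\<close>
definition padic_ball :: "nat \<Rightarrow> (int \<Rightarrow> rat) \<Rightarrow> int \<Rightarrow> (int \<Rightarrow> rat) set" where
  "padic_ball p a k = {x \<in> Qp p. x (- k) = a (- k)}"

text \<open>Haar measure on Z_p (normalised m(Z_p) = 1), constructed as the image of the product of
uniform measures on the digits {0..p-1} under x = sum_k d_k p^k.  Since every set considered
below lies in Z_p, this is the restriction of the Haar measure of Q_p to Z_p.\<close>
definition digits_to_Qp :: "nat \<Rightarrow> (nat \<Rightarrow> nat) \<Rightarrow> (int \<Rightarrow> rat)" where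
  "digits_to_Qp p d = (\<lambda>n. if n \<le> 0 then 0 else of_nat (\<Sum>k<nat n. d k * p ^ k))"

definition haar_Zp :: "nat \<Rightarrow> (int \<Rightarrow> rat) measure" where
  "haar_Zp p = distr (PiM (UNIV :: nat set) (\<lambda>_. uniform_count_measure {0..<p}))
                     (PiM (UNIV :: int set) (\<lambda>_. count_space UNIV)) (digits_to_Qp p)"

definition padic_inner :: "nat \<Rightarrow> (int \<Rightarrow> rat) set \<Rightarrow> ((int \<Rightarrow> rat) \<Rightarrow> complex)
    \<Rightarrow> ((int \<Rightarrow> rat) \<Rightarrow> complex) \<Rightarrow> complex" where
  "padic_inner p \<Omega> f g =
     (LINT x | restrict_space (haar_Zp p) \<Omega>. f x * cnj (g x)) / complex_of_real (measure (haar_Zp p) \<Omega>)"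

text \<open>Lambda is a spectrum of Omega: {chi_lambda|_Omega} is an orthonormal basis of
L^2(m|_Omega / m(Omega)), i.e. an orthonormal family whose orthogonal complement is trivial.\<close>
definition is_spectrum :: "nat \<Rightarrow> (int \<Rightarrow> rat) set \<Rightarrow> (int \<Rightarrow> rat) set \<Rightarrow> bool" where
  "is_spectrum p \<Omega> \<Lambda> \<longleftrightarrow>
     (\<forall>l\<in>\<Lambda>. \<forall>m\<in>\<Lambda>. padic_inner p \<Omega> (padic_chi p l) (padic_chi p m) = (if l = m then 1 else 0))
   \<and> (\<forall>f :: (int \<Rightarrow> rat) \<Rightarrow> complex.
        f \<in> borel_measurable (restrict_space (haar_Zp p) \<Omega>)
      \<and> integrable (restrict_space (haar_Zp p) \<Omega>) (\<lambda>x. (cmod (f x))\<^sup>2)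
      \<and> (\<forall>l\<in>\<Lambda>. padic_inner p \<Omega> f (padic_chi p l) = 0)
      \<longrightarrow> (AE x in restrict_space (haar_Zp p) \<Omega>. f x = 0))"

definition padic_Omega :: "nat \<Rightarrow> nat \<Rightarrow> nat set \<Rightarrow> (int \<Rightarrow> rat) set" where
  "padic_Omega p \<gamma> C = (\<Union>c\<in>C. padic_ball p (padic_of_int p (int c)) (- int \<gamma>))"

end

theory Submission
  imports Defs
begin

text \<open>Fix a centre a and let \<Lambda>_a be the part of \<Lambda> in B(a, p^\<gamma>).
On \<Omega>, every \<chi>_l with l \<in> \<Lambda>_a is \<chi>_a times a function of the residue c = x mod p^\<gamma> \<in> C,
whereas for l outside the ball, \<chi>_a times the conjugate of \<chi>_l is a nontrivial character on each
coset c + p^\<gamma> Z_p and integrates to zero against every function of the residue.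
Orthonormality thus makes {\<chi>_l : l \<in> \<Lambda>_a} an orthogonal family of vectors in \<complex>^C, whence
#\<Lambda>_a \<le> #C. If the inequality were strict, \<chi>_a times a nonzero vector of \<complex>^C orthogonal to
this family would be orthogonal to every \<chi>_l with l \<in> \<Lambda>, contradicting completeness.\<close>

lemma diff_rmod: "a - rmod a m = m * of_int \<lfloor>a / m\<rfloor>"
  by (simp add: rmod_def)

lemma rmod_bounds:
  assumes "(m::rat) > 0"
  shows "0 \<le> rmod a m" "rmod a m < m"
proof -
  have "of_int \<lfloor>a / m\<rfloor> \<le> a / m" by (rule of_int_floor_le)
  hence "m * of_int \<lfloor>a / m\<rfloor> \<le> a" using assms by (metis pos_le_divide_eq mult.commute)
  thus "0 \<le> rmod a m" by (simp add: rmod_def)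
  have "a / m < of_int \<lfloor>a / m\<rfloor> + 1" by linarith
  hence "a < m * of_int \<lfloor>a / m\<rfloor> + m" using assms by (simp add: field_simps)
  thus "rmod a m < m" by (simp add: rmod_def)
qed

lemma rmod_unique:
  assumes "(m::rat) > 0" "0 \<le> r" "r < m" "a - r = m * of_int z"
  shows "rmod a m = r"
proof -
  have "a / m = of_int z + r / m" using assms by (simp add: field_simps)
  moreover have "0 \<le> r / m" "r / m < 1" using assms by auto
  ultimately have "\<lfloor>a / m\<rfloor> = z" by (simp add: floor_unique)
  thus ?thesis using assms(4) by (simp add: rmod_def)
qed

lemma rmod_eq_rmod:
  assumes "(m::rat) > 0" "a - b = m * of_int z"
  shows "rmod a m = rmod b m"
proof (rule rmod_unique[OF assms(1) rmod_bounds[OF assms(1)]])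
  show "a - rmod b m = m * of_int (z + \<lfloor>b / m\<rfloor>)"
    using assms(2) diff_rmod[of b m] by (simp add: algebra_simps)
qed

lemma rmod_eq_rmod_iff:
  assumes "(m::rat) > 0"
  shows "rmod a m = rmod b m \<longleftrightarrow> (\<exists>z. a - b = m * of_int z)"
proof
  assume "rmod a m = rmod b m"
  hence "a - b = (a - rmod a m) - (b - rmod b m)" by simp
  also have "\<dots> = m * of_int (\<lfloor>a / m\<rfloor> - \<lfloor>b / m\<rfloor>)" by (simp add: diff_rmod algebra_simps)
  finally show "\<exists>z. a - b = m * of_int z" by blast
qed (use rmod_eq_rmod[OF assms] in blast)

lemma rmod_of_nat:
  assumes "m > 0"
  shows "rmod (of_nat a) (of_nat m) = (of_nat (a mod m) :: rat)"
proof (rule rmod_unique[where z = "int (a div m)"])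
  have "a = m * (a div m) + a mod m" by simp
  hence "(of_nat a :: rat) = of_nat m * of_nat (a div m) + of_nat (a mod m)"
    by (metis of_nat_add of_nat_mult)
  thus "of_nat a - of_nat (a mod m) = (of_nat m :: rat) * of_int (int (a div m))" by simp
qed (use assms in auto)

lemma QpD:
  assumes "x \<in> Qp p"
  shows "\<And>n. x n \<in> Zinvp p" "\<And>n. 0 \<le> x n" "\<And>n. x n < of_nat p powi n"
    "\<And>n. x n = rmod (x (n + 1)) (of_nat p powi n)" "\<exists>N. \<forall>n\<le>N. x n = 0"
  using assms unfolding Qp_def by blast+

lemma Qp_residue_diff:
  assumes x: "x \<in> Qp p" and p: "p > 0" and "n \<le> m"
  shows "\<exists>z. x m - x n = of_nat p powi n * of_int z"
  using \<open>n \<le> m\<close>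
proof (induction m rule: int_ge_induct)
  case base then show ?case by (intro exI[of _ 0]) simp
next
  case (step m)
  then obtain z where z: "x m - x n = of_nat p powi n * of_int z" by blast
  have pm: "(of_nat p powi m :: rat) = of_nat p powi n * of_nat p ^ nat (m - n)"
  proof -
    have "(of_nat p powi m :: rat) = of_nat p powi (n + (m - n))" by simp
    also have "\<dots> = of_nat p powi n * of_nat p powi (m - n)"
      by (rule power_int_add) (use p in simp)
    finally show ?thesis using step(1) by (simp add: power_int_def)
  qed
  have "x (m + 1) - x m = of_nat p powi m * of_int \<lfloor>x (m + 1) / of_nat p powi m\<rfloor>"
    using QpD(4)[OF x, of m] diff_rmod by metis
  hence "x (m + 1) - x n = of_nat p powi n
      * of_int (int (p ^ nat (m - n)) * \<lfloor>x (m + 1) / of_nat p powi m\<rfloor> + z)"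
    using z unfolding pm by (simp add: algebra_simps)
  thus ?case by blast
qed

lemma Qp_residue_rmod:
  assumes x: "x \<in> Qp p" and p: "p > 0" and "n \<le> m"
  shows "x n = rmod (x m) (of_nat p powi n)"
proof -
  obtain z where "x m - x n = of_nat p powi n * of_int z"
    using Qp_residue_diff[OF assms] by blast
  thus ?thesis using QpD(2,3)[OF x] p by (intro rmod_unique[symmetric]) auto
qed

lemma Qp_residue_0:
  assumes x: "x \<in> Qp p" and p: "p > 0" and c: "x (int \<gamma>) = of_nat c"
  shows "x 0 = 0"
proof -
  have "x 0 = rmod (x (int \<gamma>)) (of_nat p powi 0)" by (rule Qp_residue_rmod[OF x p]) simp
  also have "\<dots> = rmod (of_nat c) (of_nat 1)" using c by simp
  also have "\<dots> = of_nat (c mod 1)" by (rule rmod_of_nat) simp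
  finally show ?thesis by simp
qed

lemma Qp_residue_Ints:
  assumes x: "x \<in> Qp p" and p: "p > 0" and "x 0 = 0" "0 \<le> m"
  shows "x m \<in> \<int>"
proof -
  have "x 0 = rmod (x m) (of_nat p powi 0)" by (rule Qp_residue_rmod[OF x p \<open>0 \<le> m\<close>])
  hence "x m = of_int \<lfloor>x m\<rfloor>" using \<open>x 0 = 0\<close> by (simp add: rmod_def)
  thus ?thesis by (metis Ints_of_int)
qed

definition denom_exp :: "(int \<Rightarrow> rat) \<Rightarrow> nat" where
  "denom_exp x = (SOME K. x (- int K) = 0)"

lemma Qp_denom_exp:
  assumes "x \<in> Qp p"
  shows "x (- int (denom_exp x)) = 0"
proof -
  obtain N where N: "\<forall>n\<le>N. x n = 0" using QpD(5)[OF assms] by blast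
  have "x (- int (nat (- N))) = 0" using N by simp
  thus ?thesis unfolding denom_exp_def by (rule someI)
qed

lemma Qp_residue_times_power_Ints:
  assumes x: "x \<in> Qp p" and p: "p > 0" and M: "denom_exp x \<le> M"
  shows "x (int M) * of_nat p ^ M \<in> \<int>"
proof -
  define K where "K = denom_exp x"
  have "0 = rmod (x (int M)) (of_nat p powi (- int K))"
    using Qp_residue_rmod[OF x p, of "- int K" "int M"] Qp_denom_exp[OF x] by (simp add: K_def)
  hence "x (int M) = of_nat p powi (- int K) * of_int \<lfloor>x (int M) / of_nat p powi (- int K)\<rfloor>"
    using diff_rmod[of "x (int M)"] by (metis diff_zero)
  hence "x (int M) * of_nat p ^ K = of_int \<lfloor>x (int M) / of_nat p powi (- int K)\<rfloor>"
    using p by (simp add: power_int_minus field_simps)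
  hence "x (int M) * of_nat p ^ K \<in> \<int>" by (metis Ints_of_int)
  moreover have "x (int M) * of_nat p ^ M = x (int M) * of_nat p ^ K * of_nat (p ^ (M - K))"
    using M by (simp add: K_def mult.assoc power_add[symmetric])
  ultimately show ?thesis by (metis Ints_mult Ints_of_nat)
qed

definition cis_rat :: "rat \<Rightarrow> complex" where
  "cis_rat q = cis (2 * pi * real_of_rat q)"

lemma cis_rat_add: "cis_rat (q + r) = cis_rat q * cis_rat r"
  by (simp add: cis_rat_def cis_mult of_rat_add distrib_left)

lemma cis_rat_Ints: "q \<in> \<int> \<Longrightarrow> cis_rat q = 1"
  by (elim Ints_cases) (simp add: cis_rat_def cis_multiple_2pi)

lemma cis_rat_eq_1_iff: "cis_rat q = 1 \<longleftrightarrow> q \<in> \<int>"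
proof
  assume "cis_rat q = 1"
  hence "exp (\<i> * complex_of_real (2 * pi * real_of_rat q)) = 1"
    by (simp add: cis_rat_def cis_conv_exp)
  then obtain n :: int where "2 * pi * real_of_rat q = of_int (2 * n) * pi"
    by (auto simp: exp_eq_1)
  hence "real_of_rat q = real_of_rat (of_int n)" by (simp add: algebra_simps)
  thus "q \<in> \<int>" by (simp only: of_rat_eq_iff Ints_of_int)
qed (rule cis_rat_Ints)

lemma cnj_cis_rat: "cnj (cis_rat q) = cis_rat (- q)"
  by (simp add: cis_rat_def cis_cnj of_rat_minus)

lemma cis_rat_mult_cnj: "cis_rat q * cnj (cis_rat q) = 1"
  by (simp add: cnj_cis_rat cis_rat_add[symmetric]) (simp add: cis_rat_def)

lemma cis_rat_power: "cis_rat q ^ k = cis_rat (of_nat k * q)"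
  by (induction k) (simp_all add: cis_rat_add[symmetric] algebra_simps, simp add: cis_rat_def)

lemma padic_chi_mult_cnj: "padic_chi p a x * cnj (padic_chi p a x) = 1"
  by (simp add: padic_chi_def cis_cnj cis_mult)

lemma norm_padic_chi: "norm (padic_chi p a x) = 1"
  by (simp add: padic_chi_def)

lemma padic_mult_eqI:
  assumes "\<forall>m\<ge>M. rmod (x m * y m) (of_nat p powi n) = q"
  shows "padic_mult p x y n = q"
  unfolding padic_mult_def
proof (rule the_equality)
  fix q' assume "\<exists>M'. \<forall>m\<ge>M'. rmod (x m * y m) (of_nat p powi n) = q'"
  then obtain M' where M': "\<forall>m\<ge>M'. rmod (x m * y m) (of_nat p powi n) = q'" by blast
  have "rmod (x (max M M') * y (max M M')) (of_nat p powi n) = q'" using M' by simp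
  moreover have "rmod (x (max M M') * y (max M M')) (of_nat p powi n) = q" using assms by simp
  ultimately show "q' = q" by simp
qed (use assms in blast)

lemma padic_chi_eq_cis_rat:
  assumes a: "a \<in> Qp p" and x: "x \<in> Qp p" and p: "p > 0" and x0: "x 0 = 0"
    and M: "denom_exp a \<le> M"
  shows "padic_chi p a x = cis_rat (a (int M) * x (int M))"
proof -
  obtain w where w: "a (int M) * of_nat p ^ M = of_int w"
    using Qp_residue_times_power_Ints[OF a p M] by (elim Ints_cases)
  obtain u where u: "x (int M) = of_int u"
    using Qp_residue_Ints[OF x p x0, of "int M"] by (auto elim: Ints_cases)
  define v where "v = rmod (a (int M) * x (int M)) 1"
  have "rmod (a m * x m) 1 = v" if m: "int M \<le> m" for m
  proof -
    obtain al where "a m - a (int M) = of_nat p powi int M * of_int al"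
      using Qp_residue_diff[OF a p m] by blast
    hence al: "a m = a (int M) + of_nat p ^ M * of_int al" by simp
    obtain xi where "x m - x (int M) = of_nat p powi int M * of_int xi"
      using Qp_residue_diff[OF x p m] by blast
    hence xi: "x m = x (int M) + of_nat p ^ M * of_int xi" by simp
    have "a m * x m - a (int M) * x (int M) = (a (int M) * of_nat p ^ M) * of_int xi
        + of_nat p ^ M * of_int al * x (int M) + of_nat p ^ M * of_int al * (of_nat p ^ M * of_int xi)"
      unfolding al xi by (simp add: algebra_simps)
    also have "\<dots> = 1 * of_int (w * xi + int p ^ M * al * u + int p ^ M * al * (int p ^ M * xi))"
      unfolding w u by simp
    finally show ?thesis unfolding v_def by (rule rmod_eq_rmod[OF zero_less_one])
  qed
  hence "padic_mult p a x 0 = v"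
    by (intro padic_mult_eqI[where M = "int M"]) simp
  hence "padic_chi p a x = cis_rat (a (int M) * x (int M) + of_int (- \<lfloor>a (int M) * x (int M)\<rfloor>))"
    by (simp add: padic_chi_def padic_frac_def cis_rat_def v_def rmod_def)
  thus ?thesis by (simp only: cis_rat_add cis_rat_Ints[OF Ints_of_int] mult_1_right)
qed

section \<open>The Haar measure through digit expansions\<close>

abbreviation digit_product :: "nat \<Rightarrow> (nat \<Rightarrow> nat) measure" where
  "digit_product p \<equiv> PiM UNIV (\<lambda>_. uniform_count_measure {0..<p})"

abbreviation residue_product :: "(int \<Rightarrow> rat) measure" where
  "residue_product \<equiv> PiM UNIV (\<lambda>_. count_space UNIV)"

definition digit_sum :: "nat \<Rightarrow> nat \<Rightarrow> (nat \<Rightarrow> nat) \<Rightarrow> nat" where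
  "digit_sum p M d = (\<Sum>k<M. d k * p ^ k)"

lemma space_digit_product: "space (digit_product p) = {d. \<forall>k. d k < p}"
  by (auto simp: space_PiM space_uniform_count_measure PiE_def extensional_def Pi_def)

lemma space_residue_product: "space residue_product = UNIV"
  by (simp add: space_PiM)

lemma prob_space_digit_product: "p > 0 \<Longrightarrow> prob_space (digit_product p)"
  by (rule prob_space_PiM) (auto intro!: prob_space_uniform_count_measure)

lemma digit_sum_Suc: "digit_sum p (Suc M) d = digit_sum p M d + d M * p ^ M"
  by (simp add: digit_sum_def)

lemma digit_sum_less:
  assumes "\<forall>k. d k < p"
  shows "digit_sum p M d < p ^ M"
proof (induction M)
  case 0 then show ?case by (simp add: digit_sum_def)
next
  case (Suc M)
  have "d M * p ^ M \<le> (p - 1) * p ^ M" using assms[rule_format, of M] by simp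
  moreover have "digit_sum p M d + 1 \<le> p ^ M" using Suc by simp
  ultimately have "digit_sum p M d + d M * p ^ M + 1 \<le> p ^ M + (p - 1) * p ^ M" by linarith
  also have "\<dots> = p ^ Suc M" using assms by (cases p) (auto simp: algebra_simps)
  finally show ?case by (simp add: digit_sum_Suc)
qed

lemma digit_sum_mod:
  assumes "\<forall>k. d k < p" "k \<le> M"
  shows "digit_sum p M d mod p ^ k = digit_sum p k d"
  using assms(2)
proof (induction M rule: dec_induct)
  case base then show ?case using digit_sum_less[OF assms(1)] by simp
next
  case (step M)
  have "p ^ M = p ^ k * p ^ (M - k)" using step(1) by (simp add: power_add[symmetric])
  hence "digit_sum p (Suc M) d = digit_sum p M d + p ^ k * (d M * p ^ (M - k))"
    by (simp add: digit_sum_Suc algebra_simps)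
  then show ?case using step by simp
qed

lemma digit_sum_digit:
  assumes d: "\<forall>k. d k < p" and "k < M"
  shows "digit_sum p M d div p ^ k mod p = d k"
proof -
  have p: "p > 0" using d by (metis gr_zeroI not_less_zero)
  have "digit_sum p M d mod (p ^ k * p) = p ^ k * (digit_sum p M d div p ^ k mod p) + digit_sum p M d mod p ^ k"
    by (rule mod_mult2_eq)
  moreover have "digit_sum p M d mod (p ^ k * p) = digit_sum p k d + d k * p ^ k"
    using digit_sum_mod[OF d, of "Suc k" M] \<open>k < M\<close> by (simp add: mult.commute digit_sum_Suc)
  moreover have "digit_sum p M d mod p ^ k = digit_sum p k d"
    using digit_sum_mod[OF d, of k M] \<open>k < M\<close> by simp
  ultimately show ?thesis using p by simp
qed

lemma digit_sum_of_digits: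
  assumes "p > 0"
  shows "digit_sum p M (\<lambda>k. j div p ^ k mod p) = j mod p ^ M"
proof (induction M)
  case 0 then show ?case by (simp add: digit_sum_def)
next
  case (Suc M)
  have "j mod (p ^ M * p) = p ^ M * (j div p ^ M mod p) + j mod p ^ M" by (rule mod_mult2_eq)
  then show ?case using Suc by (simp add: digit_sum_Suc algebra_simps)
qed

lemma digit_sum_preimage:
  assumes "p > 0" "j < p ^ M"
  shows "{d \<in> space (digit_product p). digit_sum p M d = j}
       = prod_emb UNIV (\<lambda>_. uniform_count_measure {0..<p}) {..<M} (PiE {..<M} (\<lambda>k. {j div p ^ k mod p}))"
proof (intro set_eqI iffI)
  fix d assume "d \<in> {d \<in> space (digit_product p). digit_sum p M d = j}"
  hence d: "\<forall>k. d k < p" "digit_sum p M d = j" by (auto simp: space_digit_product)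
  thus "d \<in> prod_emb UNIV (\<lambda>_. uniform_count_measure {0..<p}) {..<M} (PiE {..<M} (\<lambda>k. {j div p ^ k mod p}))"
    using digit_sum_digit[OF d(1)]
    by (auto simp: prod_emb_def space_digit_product PiE_def extensional_def space_uniform_count_measure)
next
  fix d assume "d \<in> prod_emb UNIV (\<lambda>_. uniform_count_measure {0..<p}) {..<M} (PiE {..<M} (\<lambda>k. {j div p ^ k mod p}))"
  hence d: "\<forall>k. d k < p" "\<forall>k<M. d k = j div p ^ k mod p"
    by (auto simp: prod_emb_def space_digit_product PiE_def space_uniform_count_measure Pi_iff)
  have "digit_sum p M d = digit_sum p M (\<lambda>k. j div p ^ k mod p)" unfolding digit_sum_def using d(2) by simp
  also have "\<dots> = j" using digit_sum_of_digits[OF assms(1)] assms(2) by simp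
  finally show "d \<in> {d \<in> space (digit_product p). digit_sum p M d = j}"
    using d(1) by (simp add: space_digit_product)
qed

lemma sets_digit_sum_eq:
  assumes "p > 0"
  shows "{d \<in> space (digit_product p). digit_sum p M d = j} \<in> sets (digit_product p)"
proof (cases "j < p ^ M")
  case True
  show ?thesis unfolding digit_sum_preimage[OF assms True]
    by (rule sets_PiM_I) (use assms in \<open>auto simp: sets_uniform_count_measure\<close>)
next
  case False
  hence "{d \<in> space (digit_product p). digit_sum p M d = j} = {}"
    using digit_sum_less by (fastforce simp: space_digit_product)
  then show ?thesis by (metis sets.empty_sets)
qed

lemma digit_sum_measurable:
  assumes "p > 0"
  shows "digit_sum p M \<in> measurable (digit_product p) (count_space UNIV)"
proof (subst measurable_count_space_eq2_countable, intro conjI ballI)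
  fix j :: nat
  have "digit_sum p M -` {j} \<inter> space (digit_product p) = {d \<in> space (digit_product p). digit_sum p M d = j}"
    by auto
  thus "digit_sum p M -` {j} \<inter> space (digit_product p) \<in> sets (digit_product p)"
    using sets_digit_sum_eq[OF assms] by simp
qed simp

lemma measure_digit_sum_eq:
  assumes "p > 0" "j < p ^ M"
  shows "measure (digit_product p) {d \<in> space (digit_product p). digit_sum p M d = j} = 1 / real p ^ M"
proof -
  have "emeasure (digit_product p) {d \<in> space (digit_product p). digit_sum p M d = j}
      = (\<Prod>k\<in>{..<M}. emeasure (uniform_count_measure {0..<p}) {j div p ^ k mod p})"
    unfolding digit_sum_preimage[OF assms] by (rule emeasure_PiM_emb)
      (use assms in \<open>auto simp: prob_space_uniform_count_measure sets_uniform_count_measure\<close>)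
  also have "\<dots> = (\<Prod>k\<in>{..<M}. ennreal (1 / real p))"
    using assms by (intro prod.cong refl)
      (simp add: emeasure_uniform_count_measure ennreal_of_nat_eq_real_of_nat divide_ennreal)
  also have "\<dots> = ennreal (1 / real p ^ M)" by (simp add: ennreal_power power_one_over)
  finally show ?thesis by (simp add: measure_def)
qed

lemma integral_digit_sum:
  fixes H :: "nat \<Rightarrow> 'b::{banach, second_countable_topology}"
  assumes p: "p > 0"
  shows "integrable (digit_product p) (\<lambda>d. H (digit_sum p M d))"
    "integral\<^sup>L (digit_product p) (\<lambda>d. H (digit_sum p M d)) = (1 / real p ^ M) *\<^sub>R (\<Sum>j<p ^ M. H j)"
proof -
  interpret prob_space "digit_product p" by (rule prob_space_digit_product[OF p])
  define A where "A j = {d \<in> space (digit_product p). digit_sum p M d = j}" for j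
  have A: "A j \<in> sets (digit_product p)" for j unfolding A_def by (rule sets_digit_sum_eq[OF p])
  have H: "H (digit_sum p M d) = (\<Sum>j<p ^ M. indicator (A j) d *\<^sub>R H j)"
    if "d \<in> space (digit_product p)" for d
  proof -
    have "(\<Sum>j<p ^ M. indicator (A j) d *\<^sub>R H j) = (\<Sum>j<p ^ M. if digit_sum p M d = j then H j else 0)"
      using that by (intro sum.cong refl) (auto simp: A_def indicator_def)
    also have "\<dots> = H (digit_sum p M d)"
      using digit_sum_less[of d p M] that by (simp add: space_digit_product)
    finally show ?thesis by simp
  qed
  have ind: "integrable (digit_product p) (indicator (A j) :: _ \<Rightarrow> real)" for j
    by (rule integrable_real_indicator[OF A]) (simp add: emeasure_eq_measure)
  have int: "integrable (digit_product p) (\<lambda>d. indicator (A j) d *\<^sub>R H j)" for j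
    using ind by (rule integrable_scaleR_left)
  have int_A: "integral\<^sup>L (digit_product p) (\<lambda>d. indicator (A j) d *\<^sub>R H j) = (1 / real p ^ M) *\<^sub>R H j"
    if "j < p ^ M" for j
  proof -
    have "integral\<^sup>L (digit_product p) (indicator (A j) :: _ \<Rightarrow> real) = measure (digit_product p) (A j)"
      using A by (simp add: Int_absorb2 sets.sets_into_space)
    also have "\<dots> = 1 / real p ^ M" unfolding A_def by (rule measure_digit_sum_eq[OF p that])
    finally show ?thesis using ind by (simp add: integral_scaleR_left)
  qed
  have "integrable (digit_product p) (\<lambda>d. \<Sum>j<p ^ M. indicator (A j) d *\<^sub>R H j)"
    using int by (intro Bochner_Integration.integrable_sum) auto
  thus "integrable (digit_product p) (\<lambda>d. H (digit_sum p M d))"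
    by (subst Bochner_Integration.integrable_cong[OF refl H]) auto
  have "integral\<^sup>L (digit_product p) (\<lambda>d. H (digit_sum p M d))
      = integral\<^sup>L (digit_product p) (\<lambda>d. \<Sum>j<p ^ M. indicator (A j) d *\<^sub>R H j)"
    by (rule Bochner_Integration.integral_cong[OF refl H])
  also have "\<dots> = (\<Sum>j<p ^ M. integral\<^sup>L (digit_product p) (\<lambda>d. indicator (A j) d *\<^sub>R H j))"
    by (intro Bochner_Integration.integral_sum int)
  also have "\<dots> = (1 / real p ^ M) *\<^sub>R (\<Sum>j<p ^ M. H j)"
    by (simp add: int_A scaleR_sum_right)
  finally show "integral\<^sup>L (digit_product p) (\<lambda>d. H (digit_sum p M d)) = (1 / real p ^ M) *\<^sub>R (\<Sum>j<p ^ M. H j)" .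
qed

lemma Qp_measurable [measurable]: "Measurable.pred residue_product (\<lambda>x. x \<in> Qp p)"
  unfolding Qp_def mem_Collect_eq by measurable

lemma digits_to_Qp_digit_sum: "digits_to_Qp p d (int M) = of_nat (digit_sum p M d)"
  by (simp add: digits_to_Qp_def digit_sum_def)

lemma digits_to_Qp_in_Qp:
  assumes p: "p > 0" and d: "\<forall>k. d k < p"
  shows "digits_to_Qp p d \<in> Qp p"
  unfolding Qp_def mem_Collect_eq
proof (intro conjI allI exI[of _ 0])
  fix n :: int
  show "digits_to_Qp p d n \<in> Zinvp p"
    unfolding Zinvp_def digits_to_Qp_def
    by (rule CollectI, rule exI[of _ "if n \<le> 0 then 0 else int (\<Sum>k<nat n. d k * p ^ k)"], rule exI[of _ 0]) simp
  show "0 \<le> digits_to_Qp p d n" by (simp add: digits_to_Qp_def sum_nonneg)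
  show "digits_to_Qp p d n < of_nat p powi n"
  proof (cases "n \<le> 0")
    case False
    then obtain m where m: "n = int m" by (metis nonneg_int_cases linorder_linear)
    have "digit_sum p m d < p ^ m" by (rule digit_sum_less[OF d])
    hence "(of_nat (digit_sum p m d) :: rat) < of_nat (p ^ m)" by (simp only: of_nat_less_iff)
    then show ?thesis using digits_to_Qp_digit_sum[of p d m] m by simp
  qed (use p in \<open>simp add: digits_to_Qp_def\<close>)
  show "digits_to_Qp p d n = rmod (digits_to_Qp p d (n + 1)) (of_nat p powi n)"
  proof (cases "n < 0")
    case True then show ?thesis by (simp add: digits_to_Qp_def rmod_def)
  next
    case False
    then obtain m where m: "n = int m" by (metis nonneg_int_cases linorder_not_less)
    have "rmod (digits_to_Qp p d (n + 1)) (of_nat p powi n) = rmod (of_nat (digit_sum p (Suc m) d)) (of_nat (p ^ m))"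
      using digits_to_Qp_digit_sum[of p d "Suc m"] m by (simp add: add.commute)
    also have "\<dots> = of_nat (digit_sum p (Suc m) d mod p ^ m)" by (rule rmod_of_nat) (use p in simp)
    also have "\<dots> = digits_to_Qp p d n" using digit_sum_mod[OF d, of m "Suc m"] digits_to_Qp_digit_sum[of p d m] m by simp
    finally show ?thesis by simp
  qed
qed (simp add: digits_to_Qp_def)

lemma digits_to_Qp_measurable:
  assumes "p > 0"
  shows "digits_to_Qp p \<in> measurable (digit_product p) residue_product"
proof (rule measurable_PiM_single')
  fix n :: int
  have "(\<lambda>d. (of_nat (digit_sum p (nat n) d) :: rat)) \<in> measurable (digit_product p) (count_space UNIV)"
    by (rule measurable_compose[OF digit_sum_measurable[OF assms]]) simp
  then show "(\<lambda>d. digits_to_Qp p d n) \<in> measurable (digit_product p) (count_space UNIV)"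
    unfolding digits_to_Qp_def digit_sum_def[symmetric] by (cases "n \<le> 0") simp_all
qed simp

lemma space_haar_Zp: "space (haar_Zp p) = UNIV"
  by (simp add: haar_Zp_def space_PiM)

lemma sets_haar_Zp: "sets (haar_Zp p) = sets residue_product"
  by (simp add: haar_Zp_def)

lemma padic_Omega_eq:
  assumes p: "p > 0" and C: "C \<subseteq> {0..<p ^ \<gamma>}"
  shows "padic_Omega p \<gamma> C = {x \<in> Qp p. \<exists>c\<in>C. x (int \<gamma>) = of_nat c}"
proof -
  have "padic_of_int p (int c) (int \<gamma>) = of_nat c" if "c \<in> C" for c
  proof -
    have "padic_of_int p (int c) (int \<gamma>) = rmod (of_nat c) (of_nat (p ^ \<gamma>))"
      by (simp add: padic_of_int_def)
    also have "\<dots> = of_nat c" using rmod_of_nat[of "p ^ \<gamma>" c] p C that by auto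
    finally show ?thesis .
  qed
  thus ?thesis unfolding padic_Omega_def padic_ball_def by auto
qed

lemma padic_OmegaD:
  assumes p: "p > 0" and C: "C \<subseteq> {0..<p ^ \<gamma>}" and x: "x \<in> padic_Omega p \<gamma> C"
  shows "x \<in> Qp p" "x 0 = 0" "\<exists>c\<in>C. x (int \<gamma>) = of_nat c"
  using x Qp_residue_0[OF _ p] unfolding padic_Omega_eq[OF p C] by auto

lemma padic_Omega_in_sets:
  assumes p: "p > 0" and C: "C \<subseteq> {0..<p ^ \<gamma>}"
  shows "padic_Omega p \<gamma> C \<in> sets residue_product"
proof -
  have "{x \<in> space residue_product. x \<in> Qp p \<and> (\<exists>c\<in>C. x (int \<gamma>) = of_nat c)} \<in> sets residue_product"
    by measurable
  thus ?thesis by (simp add: space_residue_product padic_Omega_eq[OF p C])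
qed

lemma digits_to_Qp_in_padic_Omega_iff:
  assumes p: "p > 0" and C: "C \<subseteq> {0..<p ^ \<gamma>}" and d: "d \<in> space (digit_product p)" and M: "\<gamma> \<le> M"
  shows "digits_to_Qp p d \<in> padic_Omega p \<gamma> C \<longleftrightarrow> digit_sum p M d mod p ^ \<gamma> \<in> C"
proof -
  have d': "\<forall>k. d k < p" using d by (simp add: space_digit_product)
  have "digits_to_Qp p d (int \<gamma>) = of_nat (digit_sum p M d mod p ^ \<gamma>)"
    using digits_to_Qp_digit_sum[of p d \<gamma>] digit_sum_mod[OF d' M] by simp
  thus ?thesis using digits_to_Qp_in_Qp[OF p d'] by (auto simp: padic_Omega_eq[OF p C])
qed

lemma sum_lessThan_if:
  "(\<Sum>j<(N::nat). if P j then f j else 0) = (\<Sum>j\<in>{j. j < N \<and> P j}. f j)"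
proof -
  have "(\<Sum>j<N. if P j then f j else 0) = sum f ({..<N} \<inter> {j. P j})"
    by (simp add: sum.If_cases)
  also have "{..<N} \<inter> {j. P j} = {j. j < N \<and> P j}" by auto
  finally show ?thesis .
qed

lemma integral_padic_Omega:
  fixes h :: "rat \<Rightarrow> 'b::{banach, second_countable_topology}"
  assumes p: "p > 0" and C: "C \<subseteq> {0..<p ^ \<gamma>}" and M: "\<gamma> \<le> M"
    and F: "\<And>x. x \<in> padic_Omega p \<gamma> C \<Longrightarrow> F x = h (x (int M))"
  shows "integrable (restrict_space (haar_Zp p) (padic_Omega p \<gamma> C)) F"
    "integral\<^sup>L (restrict_space (haar_Zp p) (padic_Omega p \<gamma> C)) F
      = (1 / real p ^ M) *\<^sub>R (\<Sum>j\<in>{j. j < p ^ M \<and> j mod p ^ \<gamma> \<in> C}. h (of_nat j))"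
proof -
  define \<Omega> where "\<Omega> = padic_Omega p \<gamma> C"
  have \<Omega>: "\<Omega> \<inter> space (haar_Zp p) \<in> sets (haar_Zp p)"
    using padic_Omega_in_sets[OF p C] by (simp add: \<Omega>_def space_haar_Zp sets_haar_Zp)
  define G where "G x = indicator \<Omega> x *\<^sub>R h (x (int M))" for x
  have G: "G \<in> borel_measurable residue_product"
  proof -
    have "(\<lambda>x. h (x (int M))) \<in> borel_measurable residue_product"
      by (rule measurable_compose[OF measurable_component_singleton]) auto
    moreover have "\<Omega> \<in> sets residue_product" unfolding \<Omega>_def by (rule padic_Omega_in_sets[OF p C])
    ultimately show ?thesis unfolding G_def by measurable
  qed
  define H where "H j = (if j mod p ^ \<gamma> \<in> C then h (of_nat j) else 0)" for j
  have GH: "G (digits_to_Qp p d) = H (digit_sum p M d)" if "d \<in> space (digit_product p)" for d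
    using digits_to_Qp_in_padic_Omega_iff[OF p C that M]
    by (simp add: G_def H_def \<Omega>_def digits_to_Qp_digit_sum)
  have digits: "digits_to_Qp p \<in> measurable (digit_product p) residue_product"
    by (rule digits_to_Qp_measurable[OF p])
  have "integrable (digit_product p) (\<lambda>d. G (digits_to_Qp p d))"
    using integral_digit_sum(1)[OF p, of H M] by (subst Bochner_Integration.integrable_cong[OF refl GH]) auto
  hence int_G: "integrable (haar_Zp p) G"
    unfolding haar_Zp_def by (subst integrable_distr_eq[OF digits G])
  have "integral\<^sup>L (digit_product p) (\<lambda>d. G (digits_to_Qp p d)) = (1 / real p ^ M) *\<^sub>R (\<Sum>j<p ^ M. H j)"
    using integral_digit_sum(2)[OF p, of H M] by (subst Bochner_Integration.integral_cong[OF refl GH]) auto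
  hence integral_G: "integral\<^sup>L (haar_Zp p) G = (1 / real p ^ M) *\<^sub>R (\<Sum>j<p ^ M. H j)"
    unfolding haar_Zp_def by (subst integral_distr[OF digits G])
  have FG: "F x = h (x (int M))" if "x \<in> space (restrict_space (haar_Zp p) \<Omega>)" for x
    using that F by (auto simp: space_restrict_space \<Omega>_def)
  have "integrable (restrict_space (haar_Zp p) \<Omega>) (\<lambda>x. h (x (int M)))"
    using int_G by (subst integrable_restrict_space[OF \<Omega>]) (simp add: G_def[abs_def])
  thus "integrable (restrict_space (haar_Zp p) (padic_Omega p \<gamma> C)) F"
    unfolding \<Omega>_def[symmetric] by (subst Bochner_Integration.integrable_cong[OF refl FG]) auto
  have "integral\<^sup>L (restrict_space (haar_Zp p) \<Omega>) F = integral\<^sup>L (restrict_space (haar_Zp p) \<Omega>) (\<lambda>x. h (x (int M)))"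
    by (rule Bochner_Integration.integral_cong[OF refl FG])
  also have "\<dots> = integral\<^sup>L (haar_Zp p) G"
    by (subst integral_restrict_space[OF \<Omega>]) (simp add: G_def[abs_def])
  also have "\<dots> = (1 / real p ^ M) *\<^sub>R (\<Sum>j<p ^ M. H j)" by (rule integral_G)
  also have "(\<Sum>j<p ^ M. H j) = (\<Sum>j\<in>{j. j < p ^ M \<and> j mod p ^ \<gamma> \<in> C}. h (of_nat j))"
    unfolding H_def by (rule sum_lessThan_if)
  finally show "integral\<^sup>L (restrict_space (haar_Zp p) (padic_Omega p \<gamma> C)) F
      = (1 / real p ^ M) *\<^sub>R (\<Sum>j\<in>{j. j < p ^ M \<and> j mod p ^ \<gamma> \<in> C}. h (of_nat j))"
    by (simp add: \<Omega>_def)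
qed

lemma residues_below_eq:
  "C \<subseteq> {0..<(N::nat)} \<Longrightarrow> {j. j < N \<and> j mod N \<in> C} = C"
  by auto

lemma measure_padic_Omega:
  assumes p: "p > 0" and C: "C \<subseteq> {0..<p ^ \<gamma>}"
  shows "measure (haar_Zp p) (padic_Omega p \<gamma> C) = real (card C) / real p ^ \<gamma>"
proof -
  let ?R = "restrict_space (haar_Zp p) (padic_Omega p \<gamma> C)"
  have "measure (haar_Zp p) (padic_Omega p \<gamma> C) = integral\<^sup>L ?R (\<lambda>_. 1::real)"
    using padic_Omega_in_sets[OF p C]
    by (simp add: measure_restrict_space space_restrict_space space_haar_Zp sets_haar_Zp)
  also have "\<dots> = (1 / real p ^ \<gamma>) *\<^sub>R (\<Sum>j\<in>{j. j < p ^ \<gamma> \<and> j mod p ^ \<gamma> \<in> C}. 1)"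
    by (rule integral_padic_Omega(2)[OF p C order.refl, where h = "\<lambda>_. 1"]) simp
  finally show ?thesis by (simp add: residues_below_eq[OF C])
qed

section \<open>Character sums\<close>

lemma sum_lessThan_mult_split:
  fixes f :: "nat \<Rightarrow> 'a::comm_monoid_add"
  shows "(\<Sum>j<A * B. f j) = (\<Sum>c<A. \<Sum>k<B. f (c + A * k))"
proof (induction B)
  case (Suc B)
  have "(\<Sum>j<A * Suc B. f j) = (\<Sum>j<A * B. f j) + (\<Sum>j\<in>{A * B..<A * B + A}. f j)"
    by (simp add: sum.atLeastLessThan_concat[symmetric] lessThan_atLeast0 algebra_simps)
  also have "(\<Sum>j\<in>{A * B..<A * B + A}. f j) = (\<Sum>c<A. f (c + A * B))"
    using sum.shift_bounds_nat_ivl[of f 0 "A * B" A] by (simp add: lessThan_atLeast0 add.commute)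
  finally show ?case using Suc by (simp add: sum.distrib)
qed simp

lemma sum_cis_rat_multiples_eq_0:
  assumes "s \<notin> \<int>" and "s * of_nat N \<in> \<int>"
  shows "(\<Sum>k<N. cis_rat (s * of_nat k)) = 0"
proof -
  have ne: "cis_rat s \<noteq> 1" using assms(1) by (simp add: cis_rat_eq_1_iff)
  have "(\<Sum>k<N. cis_rat (s * of_nat k)) = (\<Sum>k<N. cis_rat s ^ k)"
    by (simp add: cis_rat_power mult.commute)
  also have "\<dots> = (1 - cis_rat s ^ N) / (1 - cis_rat s)" using ne by (simp add: sum_gp_strict)
  also have "cis_rat s ^ N = 1"
    using assms(2) by (simp add: cis_rat_power mult.commute cis_rat_Ints)
  finally show ?thesis by simp
qed

text \<open>Splitting j = c + A k, the inner sum over k is a full geometric sum of cis_rat (t A k).\<close>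
lemma sum_cis_rat_residues_eq_0:
  fixes g :: "nat \<Rightarrow> complex" and t :: rat
  assumes "t * of_nat A \<notin> \<int>" and "t * of_nat A * of_nat B \<in> \<int>"
  shows "(\<Sum>j\<in>{j. j < A * B \<and> j mod A \<in> C}. cis_rat (t * of_nat j) * g (j mod A)) = 0"
proof -
  have A: "A > 0" using assms(1) by (intro gr0I) simp
  define f where "f j = (if j mod A \<in> C then cis_rat (t * of_nat j) * g (j mod A) else 0)" for j
  have "(\<Sum>j\<in>{j. j < A * B \<and> j mod A \<in> C}. cis_rat (t * of_nat j) * g (j mod A)) = (\<Sum>j<A * B. f j)"
    unfolding f_def by (rule sum_lessThan_if[symmetric])
  also have "\<dots> = (\<Sum>c<A. \<Sum>k<B. f (c + A * k))" by (rule sum_lessThan_mult_split)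
  also have "\<dots> = (\<Sum>c<A. (if c \<in> C then cis_rat (t * of_nat c) * g c else 0)
                          * (\<Sum>k<B. cis_rat ((t * of_nat A) * of_nat k)))"
  proof (intro sum.cong refl)
    fix c assume "c \<in> {..<A}"
    hence "f (c + A * k) = (if c \<in> C then cis_rat (t * of_nat c) * g c else 0) * cis_rat ((t * of_nat A) * of_nat k)" for k
      by (simp add: f_def cis_rat_add[symmetric] algebra_simps)
    thus "(\<Sum>k<B. f (c + A * k)) = (if c \<in> C then cis_rat (t * of_nat c) * g c else 0)
                                  * (\<Sum>k<B. cis_rat ((t * of_nat A) * of_nat k))"
      by (simp add: sum_distrib_left)
  qed
  also have "(\<Sum>k<B. cis_rat ((t * of_nat A) * of_nat k)) = 0"
    by (rule sum_cis_rat_multiples_eq_0[OF assms])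
  finally show ?thesis by simp
qed

section \<open>Projection onto an orthogonal family in \<open>\<complex>^C\<close>\<close>

text \<open>The indicator of c0 minus its orthogonal projection onto the span of the vectors
\<kappa> l, each of squared norm #C.\<close>
definition proj_residual :: "('l \<Rightarrow> 'c \<Rightarrow> complex) \<Rightarrow> 'l set \<Rightarrow> 'c set \<Rightarrow> 'c \<Rightarrow> 'c \<Rightarrow> complex" where
  "proj_residual \<kappa> F C c0 d =
     (if d = c0 then 1 else 0) - (\<Sum>l\<in>F. cnj (\<kappa> l c0) * \<kappa> l d) / of_nat (card C)"

context
  fixes \<kappa> :: "'l \<Rightarrow> 'c \<Rightarrow> complex" and F :: "'l set" and C :: "'c set" and c0 :: 'c
  assumes C: "finite C" "c0 \<in> C" and F: "finite F"
    and orth: "\<And>l m. l \<in> F \<Longrightarrow> m \<in> F \<Longrightarrow>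
      (\<Sum>c\<in>C. \<kappa> l c * cnj (\<kappa> m c)) = (if l = m then of_nat (card C) else 0)"
begin

lemma proj_residual_orthogonal:
  assumes m: "m \<in> F"
  shows "(\<Sum>d\<in>C. proj_residual \<kappa> F C c0 d * cnj (\<kappa> m d)) = 0"
proof -
  define n where "n = (of_nat (card C) :: complex)"
  have n0: "n \<noteq> 0" using C by (auto simp: n_def card_gt_0_iff)
  have "proj_residual \<kappa> F C c0 d * cnj (\<kappa> m d) = (if d = c0 then cnj (\<kappa> m d) else 0)
      - (\<Sum>l\<in>F. cnj (\<kappa> l c0) * (\<kappa> l d * cnj (\<kappa> m d))) / n" for d
    by (cases "d = c0") (simp_all add: proj_residual_def n_def[symmetric] left_diff_distrib
        sum_distrib_right mult.assoc)
  hence "(\<Sum>d\<in>C. proj_residual \<kappa> F C c0 d * cnj (\<kappa> m d))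
      = (\<Sum>d\<in>C. if d = c0 then cnj (\<kappa> m d) else 0)
        - (\<Sum>d\<in>C. \<Sum>l\<in>F. cnj (\<kappa> l c0) * (\<kappa> l d * cnj (\<kappa> m d))) / n"
    by (simp only: sum_subtractf sum_divide_distrib[symmetric])
  also have "(\<Sum>d\<in>C. \<Sum>l\<in>F. cnj (\<kappa> l c0) * (\<kappa> l d * cnj (\<kappa> m d)))
      = (\<Sum>l\<in>F. cnj (\<kappa> l c0) * (\<Sum>d\<in>C. \<kappa> l d * cnj (\<kappa> m d)))"
    by (subst sum.swap) (simp add: sum_distrib_left)
  also have "\<dots> = (\<Sum>l\<in>F. if l = m then cnj (\<kappa> l c0) * n else 0)"
    using orth m by (intro sum.cong refl) (simp add: n_def)
  also have "\<dots> = cnj (\<kappa> m c0) * n" using F m by simp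
  finally show ?thesis using C n0 by simp
qed

lemma proj_residual_norm:
  assumes unit: "\<And>l. l \<in> F \<Longrightarrow> \<kappa> l c0 * cnj (\<kappa> l c0) = 1"
  shows "(\<Sum>d\<in>C. (cmod (proj_residual \<kappa> F C c0 d))\<^sup>2) = 1 - real (card F) / real (card C)"
proof -
  define r where "r = proj_residual \<kappa> F C c0"
  define n where "n = (of_nat (card C) :: complex)"
  have cnj_r: "cnj (r d) = (if d = c0 then 1 else 0) - (\<Sum>l\<in>F. \<kappa> l c0 * cnj (\<kappa> l d)) / n" for d
    by (simp add: r_def proj_residual_def n_def cnj_sum mult.commute)
  have "r d * cnj (r d) = (if d = c0 then r d else 0) - (\<Sum>l\<in>F. \<kappa> l c0 * (r d * cnj (\<kappa> l d))) / n" for d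
    by (cases "d = c0") (simp_all add: cnj_r right_diff_distrib sum_distrib_left mult.assoc mult.left_commute)
  hence "(\<Sum>d\<in>C. r d * cnj (r d))
      = (\<Sum>d\<in>C. if d = c0 then r d else 0) - (\<Sum>d\<in>C. \<Sum>l\<in>F. \<kappa> l c0 * (r d * cnj (\<kappa> l d))) / n"
    by (simp only: sum_subtractf sum_divide_distrib[symmetric])
  also have "(\<Sum>d\<in>C. \<Sum>l\<in>F. \<kappa> l c0 * (r d * cnj (\<kappa> l d))) = (\<Sum>l\<in>F. \<kappa> l c0 * (\<Sum>d\<in>C. r d * cnj (\<kappa> l d)))"
    by (subst sum.swap) (simp add: sum_distrib_left)
  also have "\<dots> = 0" using proj_residual_orthogonal by (simp add: r_def)
  also have "(\<Sum>d\<in>C. if d = c0 then r d else 0) = 1 - of_nat (card F) / n"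
    using C unit by (simp add: r_def proj_residual_def n_def mult.commute)
  finally have "(\<Sum>d\<in>C. r d * cnj (r d)) = 1 - of_nat (card F) / of_nat (card C)"
    by (simp add: n_def)
  moreover have "(\<Sum>d\<in>C. r d * cnj (r d)) = complex_of_real (\<Sum>d\<in>C. (cmod (r d))\<^sup>2)"
    by (simp only: of_real_sum complex_norm_square)
  ultimately have "complex_of_real (\<Sum>d\<in>C. (cmod (r d))\<^sup>2) = complex_of_real (1 - real (card F) / real (card C))"
    by simp
  thus ?thesis by (simp only: of_real_eq_iff r_def)
qed

end

lemma padic_chi_same_ball:
  assumes p: "p > 0" and a: "a \<in> Qp p" and l: "l \<in> Qp p" and la: "l (- int \<gamma>) = a (- int \<gamma>)"
    and M: "\<gamma> \<le> M" "denom_exp a \<le> M" "denom_exp l \<le> M"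
    and x: "x \<in> Qp p" and c: "x (int \<gamma>) = of_nat c"
  shows "padic_chi p l x = padic_chi p a x * cis_rat ((l (int M) - a (int M)) * of_nat c)"
proof -
  have x0: "x 0 = 0" by (rule Qp_residue_0[OF x p c])
  have pos: "(0::rat) < of_nat p powi (- int \<gamma>)" using p by simp
  have "rmod (l (int M)) (of_nat p powi (- int \<gamma>)) = rmod (a (int M)) (of_nat p powi (- int \<gamma>))"
    using Qp_residue_rmod[OF l p, of "- int \<gamma>" "int M"] Qp_residue_rmod[OF a p, of "- int \<gamma>" "int M"] la
    by simp
  then obtain j where j: "l (int M) - a (int M) = of_nat p powi (- int \<gamma>) * of_int j"
    using rmod_eq_rmod_iff[OF pos] by blast
  obtain xi where xi: "x (int M) - x (int \<gamma>) = of_nat p powi (int \<gamma>) * of_int xi"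
    using Qp_residue_diff[OF x p] M(1) by (metis of_nat_le_iff)
  have "(l (int M) - a (int M)) * x (int M) = (l (int M) - a (int M)) * of_nat c
      + (of_nat p powi (- int \<gamma>) * of_nat p powi (int \<gamma>)) * of_int (j * xi)"
    using j xi c by (simp add: algebra_simps)
  also have "of_nat p powi (- int \<gamma>) * of_nat p powi (int \<gamma>) = (1::rat)"
    using p by (simp add: power_int_minus)
  finally have "l (int M) * x (int M)
      = a (int M) * x (int M) + (l (int M) - a (int M)) * of_nat c + of_int (j * xi)"
    by (simp add: algebra_simps)
  thus ?thesis
    using padic_chi_eq_cis_rat[OF l x p x0 M(3)] padic_chi_eq_cis_rat[OF a x p x0 M(2)]
    by (simp add: cis_rat_add cis_rat_Ints)
qed

text \<open>On each coset c + p^\<gamma> Z_p the integrand is a character of level p^M that is nontrivial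
on p^\<gamma> Z_p, because a and l differ modulo p^-\<gamma> Z_p.\<close>
lemma integral_padic_chi_other_ball:
  fixes g :: "nat \<Rightarrow> complex"
  assumes p: "p > 0" and C: "C \<subseteq> {0..<p ^ \<gamma>}" and a: "a \<in> Qp p" and l: "l \<in> Qp p"
    and la: "l (- int \<gamma>) \<noteq> a (- int \<gamma>)"
    and M: "\<gamma> \<le> M" "denom_exp a \<le> M" "denom_exp l \<le> M"
  shows "integral\<^sup>L (restrict_space (haar_Zp p) (padic_Omega p \<gamma> C))
           (\<lambda>x. padic_chi p a x * g (nat \<lfloor>x (int \<gamma>)\<rfloor>) * cnj (padic_chi p l x)) = 0"
proof -
  define t where "t = a (int M) - l (int M)"
  define h where "h q = cis_rat (t * q) * g (nat \<lfloor>rmod q (of_nat p powi int \<gamma>)\<rfloor>)" for q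
  have "padic_chi p a x * g (nat \<lfloor>x (int \<gamma>)\<rfloor>) * cnj (padic_chi p l x) = h (x (int M))"
    if x: "x \<in> padic_Omega p \<gamma> C" for x
  proof -
    have xq: "x \<in> Qp p" and x0: "x 0 = 0" using padic_OmegaD[OF p C x] by auto
    have "x (int \<gamma>) = rmod (x (int M)) (of_nat p powi int \<gamma>)"
      by (rule Qp_residue_rmod[OF xq p]) (use M in simp)
    thus ?thesis
      using padic_chi_eq_cis_rat[OF a xq p x0 M(2)] padic_chi_eq_cis_rat[OF l xq p x0 M(3)]
      by (simp add: h_def t_def cnj_cis_rat cis_rat_add[symmetric] algebra_simps)
  qed
  hence "integral\<^sup>L (restrict_space (haar_Zp p) (padic_Omega p \<gamma> C))
           (\<lambda>x. padic_chi p a x * g (nat \<lfloor>x (int \<gamma>)\<rfloor>) * cnj (padic_chi p l x))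
      = (1 / real p ^ M) *\<^sub>R (\<Sum>j\<in>{j. j < p ^ M \<and> j mod p ^ \<gamma> \<in> C}. h (of_nat j))"
    by (rule integral_padic_Omega(2)[OF p C M(1)])
  also have "(\<Sum>j\<in>{j. j < p ^ M \<and> j mod p ^ \<gamma> \<in> C}. h (of_nat j))
      = (\<Sum>j\<in>{j. j < p ^ \<gamma> * p ^ (M - \<gamma>) \<and> j mod p ^ \<gamma> \<in> C}. cis_rat (t * of_nat j) * g (j mod p ^ \<gamma>))"
  proof -
    have "rmod (of_nat j) (of_nat p powi int \<gamma>) = of_nat (j mod p ^ \<gamma>)" for j
      using rmod_of_nat[of "p ^ \<gamma>" j] p by simp
    moreover have "p ^ M = p ^ \<gamma> * p ^ (M - \<gamma>)" using M(1) by (simp add: power_add[symmetric])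
    ultimately show ?thesis by (simp add: h_def)
  qed
  also have "\<dots> = 0"
  proof (rule sum_cis_rat_residues_eq_0)
    show "t * of_nat (p ^ \<gamma>) \<notin> \<int>"
    proof
      assume "t * of_nat (p ^ \<gamma>) \<in> \<int>"
      then obtain z where "t * of_nat p ^ \<gamma> = of_int z" by (auto elim: Ints_cases)
      hence "a (int M) - l (int M) = of_nat p powi (- int \<gamma>) * of_int z"
        using p unfolding t_def by (simp add: power_int_minus field_simps)
      hence "rmod (a (int M)) (of_nat p powi (- int \<gamma>)) = rmod (l (int M)) (of_nat p powi (- int \<gamma>))"
        by (intro rmod_eq_rmod) (use p in simp_all)
      hence "a (- int \<gamma>) = l (- int \<gamma>)"
        using Qp_residue_rmod[OF l p, of "- int \<gamma>" "int M"] Qp_residue_rmod[OF a p, of "- int \<gamma>" "int M"]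
        by simp
      thus False using la by simp
    qed
    have "t * of_nat (p ^ \<gamma>) * of_nat (p ^ (M - \<gamma>)) = t * of_nat p ^ M"
      using M(1) by (simp add: power_add[symmetric])
    also have "\<dots> = a (int M) * of_nat p ^ M - l (int M) * of_nat p ^ M"
      by (simp add: t_def left_diff_distrib)
    also have "\<dots> \<in> \<int>"
      using Qp_residue_times_power_Ints[OF a p M(2)] Qp_residue_times_power_Ints[OF l p M(3)] by simp
    finally show "t * of_nat (p ^ \<gamma>) * of_nat (p ^ (M - \<gamma>)) \<in> \<int>" .
  qed
  finally show ?thesis by simp
qed

section \<open>Counting a spectrum in a ball\<close>

locale ball_of_spectrum =
  fixes p \<gamma> :: nat and C :: "nat set" and \<Lambda> :: "(int \<Rightarrow> rat) set"
    and a :: "int \<Rightarrow> rat" and c0 :: nat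
  assumes p_pos: "p > 0" and C_subset: "C \<subseteq> {0..<p ^ \<gamma>}" and c0_in_C: "c0 \<in> C"
    and spectrum_subset: "\<Lambda> \<subseteq> Qp p" and spectrum: "is_spectrum p (padic_Omega p \<gamma> C) \<Lambda>"
    and centre: "a \<in> Qp p"
begin

abbreviation \<Omega> :: "(int \<Rightarrow> rat) set" where
  "\<Omega> \<equiv> padic_Omega p \<gamma> C"

abbreviation R :: "(int \<Rightarrow> rat) measure" where
  "R \<equiv> restrict_space (haar_Zp p) \<Omega>"

definition ball_part :: "(int \<Rightarrow> rat) set" where
  "ball_part = padic_ball p a (int \<gamma>) \<inter> \<Lambda>"

definition level :: "(int \<Rightarrow> rat) \<Rightarrow> nat" where
  "level l = max \<gamma> (max (denom_exp a) (denom_exp l))"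

text \<open>The function of the residue by which \<chi>_l differs from \<chi>_a on \<Omega>, for l \<in> ball_part.\<close>
definition twist :: "(int \<Rightarrow> rat) \<Rightarrow> nat \<Rightarrow> complex" where
  "twist l c = cis_rat ((l (int (level l)) - a (int (level l))) * of_nat c)"

lemma orthonormal:
  "l \<in> \<Lambda> \<Longrightarrow> m \<in> \<Lambda> \<Longrightarrow> padic_inner p \<Omega> (padic_chi p l) (padic_chi p m) = (if l = m then 1 else 0)"
  using spectrum unfolding is_spectrum_def by blast

lemma complete:
  "f \<in> borel_measurable R \<Longrightarrow> integrable R (\<lambda>x. (cmod (f x))\<^sup>2) \<Longrightarrow>
    (\<forall>l\<in>\<Lambda>. padic_inner p \<Omega> f (padic_chi p l) = 0) \<Longrightarrow> AE x in R. f x = 0"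
  using spectrum unfolding is_spectrum_def by blast

lemma finite_C: "finite C"
  using C_subset by (rule finite_subset) simp

lemma card_C_pos: "card C > 0"
  using finite_C c0_in_C by (auto simp: card_gt_0_iff)

lemma mem_ball_part: "l \<in> ball_part \<longleftrightarrow> l \<in> \<Lambda> \<and> l (- int \<gamma>) = a (- int \<gamma>)"
  using spectrum_subset by (auto simp: ball_part_def padic_ball_def)

lemma padic_chi_ball_part:
  assumes l: "l \<in> ball_part" and x: "x \<in> \<Omega>"
  shows "padic_chi p l x = padic_chi p a x * twist l (nat \<lfloor>x (int \<gamma>)\<rfloor>)"
proof -
  obtain c where c: "x (int \<gamma>) = of_nat c" using padic_OmegaD(3)[OF p_pos C_subset x] by blast
  have lq: "l \<in> Qp p" using l spectrum_subset by (auto simp: mem_ball_part)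
  have xq: "x \<in> Qp p" by (rule padic_OmegaD(1)[OF p_pos C_subset x])
  have "padic_chi p l x = padic_chi p a x * cis_rat ((l (int (level l)) - a (int (level l))) * of_nat c)"
    by (rule padic_chi_same_ball[OF p_pos centre lq _ _ _ _ xq c]) (use l in \<open>auto simp: mem_ball_part level_def\<close>)
  thus ?thesis using c by (simp add: twist_def)
qed

lemma padic_inner_twisted:
  assumes u: "\<forall>x\<in>\<Omega>. u x = padic_chi p a x * \<phi> (nat \<lfloor>x (int \<gamma>)\<rfloor>)"
    and v: "\<forall>x\<in>\<Omega>. v x = padic_chi p a x * \<psi> (nat \<lfloor>x (int \<gamma>)\<rfloor>)"
  shows "padic_inner p \<Omega> u v = (\<Sum>c\<in>C. \<phi> c * cnj (\<psi> c)) / of_nat (card C)"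
proof -
  define h where "h q = \<phi> (nat \<lfloor>q\<rfloor>) * cnj (\<psi> (nat \<lfloor>q\<rfloor>))" for q :: rat
  have "u x * cnj (v x) = h (x (int \<gamma>))" if "x \<in> \<Omega>" for x
  proof -
    have "u x * cnj (v x) = (padic_chi p a x * cnj (padic_chi p a x))
        * (\<phi> (nat \<lfloor>x (int \<gamma>)\<rfloor>) * cnj (\<psi> (nat \<lfloor>x (int \<gamma>)\<rfloor>)))"
      using u v that by (simp add: algebra_simps)
    thus ?thesis by (simp add: padic_chi_mult_cnj h_def)
  qed
  hence "integral\<^sup>L R (\<lambda>x. u x * cnj (v x))
      = (1 / real p ^ \<gamma>) *\<^sub>R (\<Sum>j\<in>{j. j < p ^ \<gamma> \<and> j mod p ^ \<gamma> \<in> C}. h (of_nat j))"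
    by (rule integral_padic_Omega(2)[OF p_pos C_subset order.refl])
  also have "\<dots> = (1 / real p ^ \<gamma>) *\<^sub>R (\<Sum>c\<in>C. \<phi> c * cnj (\<psi> c))"
    by (simp add: residues_below_eq[OF C_subset] h_def)
  finally show ?thesis
    using p_pos unfolding padic_inner_def measure_padic_Omega[OF p_pos C_subset]
    by (simp add: scaleR_conv_of_real field_simps)
qed

lemma twist_orthogonal:
  assumes "l \<in> ball_part" "m \<in> ball_part"
  shows "(\<Sum>c\<in>C. twist l c * cnj (twist m c)) = (if l = m then of_nat (card C) else 0)"
proof -
  have "(\<Sum>c\<in>C. twist l c * cnj (twist m c)) / of_nat (card C)
      = padic_inner p \<Omega> (padic_chi p l) (padic_chi p m)"
    using assms by (intro padic_inner_twisted[symmetric] ballI padic_chi_ball_part)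
  also have "\<dots> = (if l = m then 1 else 0)" using assms by (simp add: orthonormal mem_ball_part)
  finally show ?thesis using card_C_pos by (auto simp: field_simps split: if_splits)
qed

lemma norm_proj_residual:
  assumes "F \<subseteq> ball_part" "finite F"
  shows "(\<Sum>d\<in>C. (cmod (proj_residual twist F C c0 d))\<^sup>2) = 1 - real (card F) / real (card C)"
  using assms(1)
  by (intro proj_residual_norm[OF finite_C c0_in_C assms(2)] twist_orthogonal) (auto simp: twist_def cis_rat_mult_cnj)

lemma card_le_card_C:
  assumes "F \<subseteq> ball_part" "finite F"
  shows "card F \<le> card C"
proof -
  have "0 \<le> (\<Sum>d\<in>C. (cmod (proj_residual twist F C c0 d))\<^sup>2)" by (rule sum_nonneg) simp
  hence "real (card F) / real (card C) \<le> 1" unfolding norm_proj_residual[OF assms] by simp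
  thus ?thesis using card_C_pos by (simp add: field_simps)
qed

lemma finite_ball_part: "finite ball_part"
proof (rule ccontr)
  assume "infinite ball_part"
  then obtain F where F: "finite F" "card F = Suc (card C)" "F \<subseteq> ball_part"
    using infinite_arbitrarily_large by blast
  have "card F \<le> card C" by (rule card_le_card_C[OF F(3,1)])
  thus False using F(2) by simp
qed

text \<open>\<chi>_a times the residual vector; written through the residue at level a so that its
measurability is evident (padic_chi itself is defined by a limit).\<close>
definition residual :: "(int \<Rightarrow> rat) \<Rightarrow> complex" where
  "residual x = cis_rat (a (int (level a)) * x (int (level a)))
     * proj_residual twist ball_part C c0 (nat \<lfloor>x (int \<gamma>)\<rfloor>)"

lemma residual_eq:
  assumes "x \<in> \<Omega>"
  shows "residual x = padic_chi p a x * proj_residual twist ball_part C c0 (nat \<lfloor>x (int \<gamma>)\<rfloor>)"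
proof -
  have xq: "x \<in> Qp p" and x0: "x 0 = 0" using padic_OmegaD[OF p_pos C_subset assms] by auto
  have "padic_chi p a x = cis_rat (a (int (level a)) * x (int (level a)))"
    by (rule padic_chi_eq_cis_rat[OF centre xq p_pos x0]) (simp add: level_def)
  thus ?thesis by (simp add: residual_def)
qed

lemma residual_measurable: "residual \<in> borel_measurable R"
proof -
  have "(\<lambda>x::int \<Rightarrow> rat. cis_rat (a (int (level a)) * x (int (level a)))) \<in> borel_measurable residue_product"
    by (rule measurable_compose[OF measurable_component_singleton]) simp_all
  moreover have "(\<lambda>x::int \<Rightarrow> rat. proj_residual twist ball_part C c0 (nat \<lfloor>x (int \<gamma>)\<rfloor>)) \<in> borel_measurable residue_product"
    by (rule measurable_compose[OF measurable_component_singleton]) simp_all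
  ultimately have "residual \<in> borel_measurable residue_product"
    unfolding residual_def[abs_def] by (intro borel_measurable_times)
  thus ?thesis
    by (intro measurable_restrict_space1) (simp add: haar_Zp_def)
qed

lemma integral_norm_residual:
  shows "integrable R (\<lambda>x. (cmod (residual x))\<^sup>2)"
    "integral\<^sup>L R (\<lambda>x. (cmod (residual x))\<^sup>2) = (1 - real (card ball_part) / real (card C)) / real p ^ \<gamma>"
proof -
  define h where "h q = (cmod (proj_residual twist ball_part C c0 (nat \<lfloor>q\<rfloor>)))\<^sup>2" for q :: rat
  have eq: "(cmod (residual x))\<^sup>2 = h (x (int \<gamma>))" if "x \<in> \<Omega>" for x
    using that by (simp add: h_def residual_eq norm_mult norm_padic_chi)
  show "integrable R (\<lambda>x. (cmod (residual x))\<^sup>2)"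
    by (rule integral_padic_Omega(1)[OF p_pos C_subset order.refl, where h = h and F = "\<lambda>x. (cmod (residual x))\<^sup>2", OF eq])
  have "integral\<^sup>L R (\<lambda>x. (cmod (residual x))\<^sup>2)
      = (1 / real p ^ \<gamma>) *\<^sub>R (\<Sum>d\<in>C. (cmod (proj_residual twist ball_part C c0 d))\<^sup>2)"
    using integral_padic_Omega(2)[OF p_pos C_subset order.refl, where h = h and F = "\<lambda>x. (cmod (residual x))\<^sup>2", OF eq]
    by (simp add: residues_below_eq[OF C_subset] h_def)
  thus "integral\<^sup>L R (\<lambda>x. (cmod (residual x))\<^sup>2) = (1 - real (card ball_part) / real (card C)) / real p ^ \<gamma>"
    by (simp add: norm_proj_residual[OF order.refl finite_ball_part])
qed

lemma padic_inner_residual: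
  assumes l: "l \<in> \<Lambda>"
  shows "padic_inner p \<Omega> residual (padic_chi p l) = 0"
proof (cases "l \<in> ball_part")
  case True
  have "padic_inner p \<Omega> residual (padic_chi p l)
      = (\<Sum>c\<in>C. proj_residual twist ball_part C c0 c * cnj (twist l c)) / of_nat (card C)"
    using True by (intro padic_inner_twisted ballI residual_eq padic_chi_ball_part)
  also have "\<dots> = 0"
    using proj_residual_orthogonal[OF finite_C c0_in_C finite_ball_part twist_orthogonal True] by simp
  finally show ?thesis .
next
  case False
  have lq: "l \<in> Qp p" using l spectrum_subset by auto
  have "integral\<^sup>L R (\<lambda>x. residual x * cnj (padic_chi p l x))
      = integral\<^sup>L R (\<lambda>x. padic_chi p a x * proj_residual twist ball_part C c0 (nat \<lfloor>x (int \<gamma>)\<rfloor>)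
                                * cnj (padic_chi p l x))"
    by (rule Bochner_Integration.integral_cong) (simp_all add: residual_eq space_restrict_space)
  also have "\<dots> = 0"
    using False l by (intro integral_padic_chi_other_ball[OF p_pos C_subset centre lq, where M = "level l"])
      (auto simp: mem_ball_part level_def)
  finally show ?thesis by (simp add: padic_inner_def)
qed

theorem card_ball_part: "card ball_part = card C"
proof (rule ccontr)
  assume "card ball_part \<noteq> card C"
  hence "card ball_part < card C" using card_le_card_C[OF order.refl finite_ball_part] by simp
  hence pos: "integral\<^sup>L R (\<lambda>x. (cmod (residual x))\<^sup>2) > 0"
    using p_pos by (simp add: integral_norm_residual(2))
  have "AE x in R. residual x = 0"
    using residual_measurable integral_norm_residual(1) padic_inner_residual by (intro complete) auto
  hence "AE x in R. (cmod (residual x))\<^sup>2 = 0" by eventually_elim simp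
  hence "integral\<^sup>L R (\<lambda>x. (cmod (residual x))\<^sup>2) = integral\<^sup>L R (\<lambda>x. 0)"
    using residual_measurable by (intro integral_cong_AE) auto
  thus False using pos by simp
qed

end

theorem lemma2p7:
  fixes p \<gamma> :: nat and C :: "nat set" and \<Lambda> :: "(int \<Rightarrow> rat) set"
  assumes "prime p" and "\<gamma> \<ge> 1"
    and "C \<subseteq> {0..<p ^ \<gamma>}" and "C \<noteq> {}"
    and "\<Lambda> \<subseteq> Qp p"
    and "is_spectrum p (padic_Omega p \<gamma> C) \<Lambda>"
  shows "\<forall>a \<in> Qp p. finite (padic_ball p a (int \<gamma>) \<inter> \<Lambda>)
                  \<and> card (padic_ball p a (int \<gamma>) \<inter> \<Lambda>) = card C"
proof
  fix a assume a: "a \<in> Qp p"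
  obtain c0 where c0: "c0 \<in> C" using assms(4) by blast
  interpret ball_of_spectrum p \<gamma> C \<Lambda> a c0
    using assms(1,3,5,6) a c0 by unfold_locales (simp_all add: prime_gt_0_nat)
  show "finite (padic_ball p a (int \<gamma>) \<inter> \<Lambda>) \<and> card (padic_ball p a (int \<gamma>) \<inter> \<Lambda>) = card C"
    using finite_ball_part card_ball_part by (simp add: ball_part_def)
qed

end
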